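(* If $X$ is a metric space with weak hyperbolic property C, then $X$ has Yu's property A.
   Context: For $R>0$, a family $\mathcal U$ of nonempty subsets of a metric space is $R$-disjoint if $d(A,B)>R$ for all distinct $A,B\in\mathcal U$, where $d(A,B)=\inf\{d(a,b):a\in A,b\in B\}$. $B_r(x)$ denotes the open ball of radius $r$ about $x$. A subset $U\subset X$ is $(N,R)$-large scale doubling if for every $x\in X$ and every $r\ge R$, $B_{2r}(x)\cap U$ can be covered by $N$ balls of radius $r$ with centers in $X$. A family $\mathcal U$ of subsets of $X$ is weakly uniformly large scale doubling if there is $(N,R)$ such that each $U\in\mathcal U$ is $(N,R)$-large scale doubling. $X$ has weak hyperbolic property C if for every sequence $R_0,R_1,\dots$ of positive reals there exist $n\ge0$ and $R_i$-disjoint families $\mathcal U_i$ ($i=0,\dots,n$) such that $\bigcup_{i=0}^n\mathcal U_i$ is a weakly uniformly large scale doubling cover of $X$. Property A is Yu's coarse amenability property: for a (discrete) metric space $X$, for every $R>0$ and $\varepsilon>0$ there exist $S>0$ and a family $\{A_x\}_{x\in X}$ of finite nonempty subsets of $X\times\mathbb N$ such that $(x,1)\in A_x$ and $A_x\subset B_S(x)\times\mathbb N$ for all $x$, and $|A_x\triangle A_y|/|A_x\cap A_y|<\varepsilon$ whenever $d(x,y)<R$. *)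

theory Defs
  imports "HOL-Analysis.Analysis"
begin

text \<open>The metric space X is the whole carrier (UNIV) of a type of class metric_space.\<close>

definition set_dist :: "'a::metric_space set \<Rightarrow> 'a set \<Rightarrow> real" where
  "set_dist A B = Inf {dist a b | a b. a \<in> A \<and> b \<in> B}"

definition R_disjoint :: "real \<Rightarrow> 'a::metric_space set set \<Rightarrow> bool" where
  "R_disjoint R \<U> \<longleftrightarrow> (\<forall>A\<in>\<U>. A \<noteq> {}) \<and>
     (\<forall>A\<in>\<U>. \<forall>B\<in>\<U>. A \<noteq> B \<longrightarrow> set_dist A B > R)"

definition ls_doubling :: "nat \<Rightarrow> real \<Rightarrow> 'a::metric_space set \<Rightarrow> bool" where
  "ls_doubling N R U \<longleftrightarrow>
     (\<forall>x r. r \<ge> R \<longrightarrow>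
        (\<exists>C. finite C \<and> card C \<le> N \<and> ball x (2 * r) \<inter> U \<subseteq> (\<Union>c\<in>C. ball c r)))"

definition weakly_unif_ls_doubling :: "'a::metric_space set set \<Rightarrow> bool" where
  "weakly_unif_ls_doubling \<U> \<longleftrightarrow> (\<exists>N R. \<forall>U\<in>\<U>. ls_doubling N R U)"

definition weak_hyperbolic_C :: "'a::metric_space itself \<Rightarrow> bool" where
  "weak_hyperbolic_C _ \<longleftrightarrow>
     (\<forall>R :: nat \<Rightarrow> real. (\<forall>i. R i > 0) \<longrightarrow>
        (\<exists>n. \<exists>\<U> :: nat \<Rightarrow> 'a set set.
           (\<forall>i\<le>n. R_disjoint (R i) (\<U> i)) \<and>
           (\<Union>(\<Union>i\<le>n. \<U> i)) = UNIV \<and>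
           weakly_unif_ls_doubling (\<Union>i\<le>n. \<U> i)))"

definition property_A :: "'a::metric_space itself \<Rightarrow> bool" where
  "property_A _ \<longleftrightarrow>
     (\<forall>R>0. \<forall>\<epsilon>>0. \<exists>S>0. \<exists>A :: 'a \<Rightarrow> ('a \<times> nat) set.
        (\<forall>x. finite (A x) \<and> A x \<noteq> {} \<and> (x, 1) \<in> A x \<and> A x \<subseteq> ball x S \<times> UNIV) \<and>
        (\<forall>x y. dist x y < R \<longrightarrow>
           real (card ((A x - A y) \<union> (A y - A x))) < \<epsilon> * real (card (A x \<inter> A y))))"

end

theory Submission
  imports Defs
begin

text \<open>
  Property A follows from its l1 form: probability weights \<open>\<xi>\<^sub>x\<close> supported in a uniformly
  bounded number of points near x, with \<open>\<parallel>\<xi>\<^sub>x - \<xi>\<^sub>y\<parallel>\<^sub>1 \<le> \<epsilon>\<close> when \<open>d(x, y) < R\<close>; rounding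
  \<open>Q \<xi>\<^sub>x\<close> down and stacking the result into columns gives the sets \<open>A\<^sub>x\<close>.

  For the l1 form, apply weak hyperbolic property C with the scales \<open>3 L\<^sub>i\<close>, where
  \<open>L\<^sub>i = 2\<^sup>i L\<^sub>0\<close> and \<open>L\<^sub>0 \<gg> R\<close>. On a large scale doubling member U of the cover, a maximal
  2T-separated net Y has at most \<open>N\<^sup>m\<close> points in a ball of radius \<open>2\<^sup>m T\<close>, so the layered
  weights \<open>\<Sum>\<^sub>k 1\<^bsub>Y \<inter> B(z, kT)\<^esub> / l\<^sup>k\<close> (\<open>k < 2\<^sup>m\<close>) move in l1 by roughly
  \<open>(l - 1/l) + N\<^sup>m / l\<^bsup>2\<^sup>m\<^esub>\<close> relative to their mass when the centre moves by less than T; this is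
  small for l close to 1 and m large. Since the members of the i-th family are \<open>3 L\<^sub>i\<close>-disjoint,
  at most one of them is within \<open>L\<^sub>i\<close> of a given point, so cutting its weights off by
  \<open>1 - d(x, U) / L\<^sub>i\<close> defines one weight per family, varying by \<open>R / L\<^sub>i + \<delta>\<close>. Their sum has
  mass at least 1 because the families cover X, and its normalization varies by at most
  \<open>2 \<Sum>\<^sub>i (R / L\<^sub>i + \<delta>) \<le> \<epsilon>\<close>.
\<close>

section \<open>Finitely supported weights\<close>

definition fsupp :: "('a \<Rightarrow> real) \<Rightarrow> 'a set" where
  "fsupp f = {p. f p \<noteq> 0}"

definition mass :: "('a \<Rightarrow> real) \<Rightarrow> real" where
  "mass f = sum f (fsupp f)"

definition l1_dist :: "('a \<Rightarrow> real) \<Rightarrow> ('a \<Rightarrow> real) \<Rightarrow> real" where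
  "l1_dist f g = (\<Sum>p\<in>fsupp f \<union> fsupp g. \<bar>f p - g p\<bar>)"

definition local_weight :: "nat \<Rightarrow> real \<Rightarrow> 'a::metric_space \<Rightarrow> ('a \<Rightarrow> real) \<Rightarrow> bool" where
  "local_weight M S x f \<longleftrightarrow>
     (\<forall>p. 0 \<le> f p) \<and> finite (fsupp f) \<and> card (fsupp f) \<le> M \<and> fsupp f \<subseteq> ball x S"

lemma sum_eq_mass:
  assumes "finite P" "fsupp f \<subseteq> P"
  shows "sum f P = mass f"
  using assms unfolding mass_def by (intro sum.mono_neutral_right) (auto simp: fsupp_def)

lemma l1_dist_eq_sum:
  assumes "finite P" "fsupp f \<subseteq> P" "fsupp g \<subseteq> P"
  shows "l1_dist f g = (\<Sum>p\<in>P. \<bar>f p - g p\<bar>)"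
  using assms unfolding l1_dist_def by (intro sum.mono_neutral_left) (auto simp: fsupp_def)

lemma l1_dist_commute: "l1_dist f g = l1_dist g f"
  unfolding l1_dist_def by (simp add: Un_commute abs_minus_commute)

lemma l1_dist_nonneg: "0 \<le> l1_dist f g"
  by (simp add: l1_dist_def sum_nonneg)

lemma l1_dist_zero_right:
  assumes "\<forall>p. 0 \<le> f p"
  shows "l1_dist f (\<lambda>_. 0) = mass f"
  using assms by (simp add: l1_dist_def mass_def fsupp_def)

lemma mass_nonneg: "\<forall>p. 0 \<le> f p \<Longrightarrow> 0 \<le> mass f"
  by (simp add: mass_def sum_nonneg)

lemma mass_scale: "mass (\<lambda>p. a * f p) = a * mass f"
  by (cases "a = 0") (simp_all add: mass_def fsupp_def sum_distrib_left)

lemma mass_normalize: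
  assumes "mass f \<noteq> 0"
  shows "mass (\<lambda>p. f p / mass f) = 1"
  using assms mass_scale[of "inverse (mass f)" f] by (simp add: field_simps)

lemma local_weight_mono:
  assumes "local_weight M S x f" "\<forall>p. 0 \<le> g p" "fsupp g \<subseteq> fsupp f"
  shows "local_weight M S x g"
  using assms card_mono[of "fsupp f" "fsupp g"] finite_subset[of "fsupp g" "fsupp f"]
  unfolding local_weight_def by auto

lemma local_weight_zero: "local_weight M S x (\<lambda>_. 0)"
  by (simp add: local_weight_def fsupp_def)

lemma local_weight_sum:
  assumes "finite I" "\<And>i. i \<in> I \<Longrightarrow> local_weight M S x (f i)"
  shows "local_weight (card I * M) S x (\<lambda>p. \<Sum>i\<in>I. f i p)"
proof -
  define P where "P = (\<Union>i\<in>I. fsupp (f i))"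
  have supp: "fsupp (\<lambda>p. \<Sum>i\<in>I. f i p) \<subseteq> P"
    unfolding fsupp_def P_def by (auto dest: sum.not_neutral_contains_not_neutral)
  have P: "finite P" using assms by (simp add: P_def local_weight_def)
  have "card P \<le> (\<Sum>i\<in>I. card (fsupp (f i)))" unfolding P_def by (rule card_UN_le[OF assms(1)])
  also have "\<dots> \<le> card I * M"
    using assms sum_bounded_above[of I "\<lambda>i. card (fsupp (f i))" M] by (simp add: local_weight_def)
  finally have "card (fsupp (\<lambda>p. \<Sum>i\<in>I. f i p)) \<le> card I * M"
    using card_mono[OF P supp] by linarith
  moreover have "P \<subseteq> ball x S" using assms(2) by (auto simp: P_def local_weight_def)
  moreover have "\<forall>p. 0 \<le> (\<Sum>i\<in>I. f i p)"
    using assms(2) by (auto simp: local_weight_def intro!: sum_nonneg)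
  ultimately show ?thesis using supp finite_subset[OF supp P] by (auto simp: local_weight_def)
qed

lemma mass_sum:
  assumes "finite I" "\<And>i. i \<in> I \<Longrightarrow> finite (fsupp (f i))"
  shows "mass (\<lambda>p. \<Sum>i\<in>I. f i p) = (\<Sum>i\<in>I. mass (f i))"
proof -
  define P where "P = (\<Union>i\<in>I. fsupp (f i))"
  have P: "finite P" using assms by (simp add: P_def)
  have "fsupp (\<lambda>p. \<Sum>i\<in>I. f i p) \<subseteq> P"
    unfolding fsupp_def P_def by (auto dest: sum.not_neutral_contains_not_neutral)
  then have "mass (\<lambda>p. \<Sum>i\<in>I. f i p) = (\<Sum>p\<in>P. \<Sum>i\<in>I. f i p)" by (rule sum_eq_mass[OF P, symmetric])
  also have "\<dots> = (\<Sum>i\<in>I. \<Sum>p\<in>P. f i p)" by (rule sum.swap)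
  also have "\<dots> = (\<Sum>i\<in>I. mass (f i))"
    using P by (intro sum.cong refl sum_eq_mass) (auto simp: P_def)
  finally show ?thesis .
qed

lemma l1_dist_sum_le:
  assumes "finite I" "\<And>i. i \<in> I \<Longrightarrow> finite (fsupp (f i))" "\<And>i. i \<in> I \<Longrightarrow> finite (fsupp (g i))"
  shows "l1_dist (\<lambda>p. \<Sum>i\<in>I. f i p) (\<lambda>p. \<Sum>i\<in>I. g i p) \<le> (\<Sum>i\<in>I. l1_dist (f i) (g i))"
proof -
  define P where "P = (\<Union>i\<in>I. fsupp (f i) \<union> fsupp (g i))"
  have P: "finite P" using assms by (simp add: P_def)
  have "l1_dist (\<lambda>p. \<Sum>i\<in>I. f i p) (\<lambda>p. \<Sum>i\<in>I. g i p)
      = (\<Sum>p\<in>P. \<bar>(\<Sum>i\<in>I. f i p) - (\<Sum>i\<in>I. g i p)\<bar>)"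
    using P by (intro l1_dist_eq_sum)
      (auto simp: fsupp_def P_def dest: sum.not_neutral_contains_not_neutral)
  also have "\<dots> = (\<Sum>p\<in>P. \<bar>\<Sum>i\<in>I. f i p - g i p\<bar>)" by (simp add: sum_subtractf)
  also have "\<dots> \<le> (\<Sum>p\<in>P. \<Sum>i\<in>I. \<bar>f i p - g i p\<bar>)" by (intro sum_mono sum_abs)
  also have "\<dots> = (\<Sum>i\<in>I. \<Sum>p\<in>P. \<bar>f i p - g i p\<bar>)" by (rule sum.swap)
  also have "\<dots> = (\<Sum>i\<in>I. l1_dist (f i) (g i))"
    using P by (intro sum.cong refl l1_dist_eq_sum[symmetric]) (auto simp: P_def)
  finally show ?thesis .
qed

lemma l1_dist_scale_le:
  assumes "finite (fsupp f)" "finite (fsupp g)" "\<forall>p. 0 \<le> g p" "0 \<le> a"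
  shows "l1_dist (\<lambda>p. a * f p) (\<lambda>p. b * g p) \<le> \<bar>a - b\<bar> * mass g + a * l1_dist f g"
proof -
  define P where "P = fsupp f \<union> fsupp g"
  have P: "finite P" using assms by (simp add: P_def)
  have "l1_dist (\<lambda>p. a * f p) (\<lambda>p. b * g p) = (\<Sum>p\<in>P. \<bar>a * f p - b * g p\<bar>)"
    by (rule l1_dist_eq_sum[OF P]) (auto simp: P_def fsupp_def)
  also have "\<dots> \<le> (\<Sum>p\<in>P. \<bar>a - b\<bar> * g p + a * \<bar>f p - g p\<bar>)"
  proof (rule sum_mono)
    fix p
    have "a * f p - b * g p = (a - b) * g p + a * (f p - g p)" by algebra
    then show "\<bar>a * f p - b * g p\<bar> \<le> \<bar>a - b\<bar> * g p + a * \<bar>f p - g p\<bar>"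
      using assms(3,4) abs_triangle_ineq[of "(a - b) * g p" "a * (f p - g p)"]
      by (simp add: abs_mult)
  qed
  also have "\<dots> = \<bar>a - b\<bar> * sum g P + a * (\<Sum>p\<in>P. \<bar>f p - g p\<bar>)"
    by (simp add: sum.distrib sum_distrib_left)
  also have "\<dots> = \<bar>a - b\<bar> * mass g + a * l1_dist f g"
    using P by (simp add: sum_eq_mass P_def l1_dist_def)
  finally show ?thesis .
qed

lemma l1_dist_normalize_le:
  assumes fin: "finite (fsupp f)" "finite (fsupp g)"
    and nonneg: "\<forall>p. 0 \<le> f p" "\<forall>p. 0 \<le> g p" and pos: "0 < mass f"
  shows "l1_dist (\<lambda>p. f p / mass f) (\<lambda>p. g p / mass g) \<le> 2 * l1_dist f g / mass f"
proof -
  define a b d where "a = mass f" and "b = mass g" and "d = l1_dist f g"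
  define P where "P = fsupp f \<union> fsupp g"
  have P: "finite P" using fin by (simp add: P_def)
  have a: "0 < a" using pos by (simp add: a_def)
  have b: "0 \<le> b" using nonneg by (simp add: b_def mass_nonneg)
  have d: "d = (\<Sum>p\<in>P. \<bar>f p - g p\<bar>)" by (simp add: d_def l1_dist_def P_def)
  have ab: "\<bar>a - b\<bar> \<le> d"
  proof -
    have "a - b = (\<Sum>p\<in>P. f p - g p)"
      using P by (simp add: a_def b_def sum_subtractf sum_eq_mass P_def)
    then show ?thesis unfolding d by (simp add: sum_abs)
  qed
  have lhs: "l1_dist (\<lambda>p. f p / a) (\<lambda>p. g p / b) = (\<Sum>p\<in>P. \<bar>f p / a - g p / b\<bar>)"
    by (rule l1_dist_eq_sum[OF P]) (auto simp: P_def fsupp_def)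
  have "(\<Sum>p\<in>P. \<bar>f p / a - g p / b\<bar>) \<le> 2 * d / a"
  proof (cases "b = 0")
    case True
    \<comment> \<open>the junk value x / 0 = 0 makes every g p / b vanish\<close>
    then have "(\<Sum>p\<in>P. \<bar>f p / a - g p / b\<bar>) = (\<Sum>p\<in>P. f p) / a"
      using nonneg a by (simp add: sum_divide_distrib)
    also have "\<dots> = 1" using P a by (simp add: sum_eq_mass P_def a_def)
    also have "\<dots> \<le> 2 * d / a" using ab a True by (simp add: field_simps)
    finally show ?thesis .
  next
    case False
    then have b: "0 < b" using b by simp
    have "(\<Sum>p\<in>P. \<bar>f p / a - g p / b\<bar>) \<le> (\<Sum>p\<in>P. \<bar>f p - g p\<bar> / a + g p * (\<bar>b - a\<bar> / (a * b)))"
    proof (rule sum_mono)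
      fix p
      have "f p / a - g p / b = (f p - g p) / a + g p * ((b - a) / (a * b))"
        using a b by (simp add: field_simps)
      then show "\<bar>f p / a - g p / b\<bar> \<le> \<bar>f p - g p\<bar> / a + g p * (\<bar>b - a\<bar> / (a * b))"
        using a b nonneg abs_triangle_ineq[of "(f p - g p) / a" "g p * ((b - a) / (a * b))"]
        by (simp add: abs_mult)
    qed
    also have "\<dots> = d / a + \<bar>b - a\<bar> / a"
      using P a b by (simp add: d sum.distrib sum_divide_distrib[symmetric]
          sum_distrib_right[symmetric] sum_eq_mass P_def b_def)
    also have "\<dots> \<le> 2 * d / a" using ab a by (simp add: field_simps abs_minus_commute)
    finally show ?thesis .
  qed
  then show ?thesis using lhs by (simp add: a_def b_def d_def)
qed

section \<open>From l1 weights to property A\<close>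

text \<open>The uniform bound M on the size of the supports replaces bounded geometry: it controls the
  rounding error when the weights are turned into finite sets.\<close>

definition property_A_l1 :: "'a::metric_space itself \<Rightarrow> bool" where
  "property_A_l1 _ \<longleftrightarrow> (\<forall>R>0. \<forall>\<epsilon>>0. \<exists>S>0. \<exists>M. \<exists>\<xi> :: 'a \<Rightarrow> 'a \<Rightarrow> real.
     (\<forall>x. local_weight M S x (\<xi> x) \<and> mass (\<xi> x) = 1) \<and>
     (\<forall>x y. dist x y < R \<longrightarrow> l1_dist (\<xi> x) (\<xi> y) \<le> \<epsilon>))"

text \<open>A weight k with values in \<open>\<nat>\<close> is stored as the columns \<open>{p} \<times> {2, \<dots>, k p + 1}\<close>; the
  level 1 stays free for the point \<open>(x, 1)\<close> that property A requires in \<open>A\<^sub>x\<close>.\<close>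

definition columns :: "'a set \<Rightarrow> ('a \<Rightarrow> nat) \<Rightarrow> ('a \<times> nat) set" where
  "columns P k = (SIGMA p:P. {2..<k p + 2})"

lemma columns_superset:
  assumes "P \<subseteq> P'" "\<And>p. p \<in> P' - P \<Longrightarrow> k p = 0"
  shows "columns P' k = columns P k"
  using assms by (force simp: columns_def)

lemma card_columns_diff:
  assumes "finite P"
  shows "card (columns P k - columns P k') = (\<Sum>p\<in>P. k p - k' p)"
proof -
  have "columns P k - columns P k' = (SIGMA p:P. {k' p + 2..<k p + 2})"
    by (auto simp: columns_def)
  then show ?thesis using assms by (simp add: card_SigmaI)
qed

lemma card_insert_columns_symdiff_le:
  fixes k k' :: "'a \<Rightarrow> nat" and a b :: "'a \<times> nat"
  assumes P: "finite P"
  defines "A \<equiv> insert a (columns P k)" and "B \<equiv> insert b (columns P k')"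
  shows "card ((A - B) \<union> (B - A)) \<le> 2 + (\<Sum>p\<in>P. (k p - k' p) + (k' p - k p))"
proof -
  have card_diff: "card (insert c (columns P h) - D) \<le> 1 + (\<Sum>p\<in>P. h p - h' p)"
    if "columns P h' \<subseteq> D" for c h h' D
  proof -
    have "card (insert c (columns P h) - D) \<le> card (insert c (columns P h - columns P h'))"
      using P that by (intro card_mono) (auto simp: columns_def)
    also have "\<dots> \<le> Suc (card (columns P h - columns P h'))"
      using P by (simp add: card_insert_if columns_def)
    finally show ?thesis using card_columns_diff[OF P] by simp
  qed
  have "card ((A - B) \<union> (B - A)) \<le> card (A - B) + card (B - A)"
    by (rule card_Un_le)
  also have "\<dots> \<le> (1 + (\<Sum>p\<in>P. k p - k' p)) + (1 + (\<Sum>p\<in>P. k' p - k p))"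
    unfolding A_def B_def by (intro add_mono card_diff) auto
  finally show ?thesis by (simp add: sum.distrib)
qed

lemma card_insert_columns_Int_ge:
  assumes "finite P"
  shows "(\<Sum>p\<in>P. min (k p) (k' p)) \<le> card (insert a (columns P k) \<inter> insert b (columns P k'))"
proof -
  have "(\<Sum>p\<in>P. min (k p) (k' p)) = card (columns P (\<lambda>p. min (k p) (k' p)))"
    using assms by (simp add: columns_def card_SigmaI)
  also have "\<dots> \<le> card (insert a (columns P k) \<inter> insert b (columns P k'))"
    using assms by (intro card_mono) (auto simp: columns_def)
  finally show ?thesis .
qed

lemma nat_floor_bounds:
  fixes a :: real
  assumes "0 \<le> a"
  shows "a - 1 \<le> real (nat \<lfloor>a\<rfloor>)" "real (nat \<lfloor>a\<rfloor>) \<le> a"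
  using assms by linarith+

lemma rounding_estimates:
  fixes Q :: real and f g :: "'a \<Rightarrow> real"
  assumes P: "finite P" and Q: "0 \<le> Q" and f: "\<forall>p. 0 \<le> f p" and g: "\<forall>p. 0 \<le> g p"
    and mass_f: "sum f P = 1"
  defines "k \<equiv> \<lambda>h p. nat \<lfloor>Q * h p\<rfloor>"
  shows "real (\<Sum>p\<in>P. (k f p - k g p) + (k g p - k f p)) \<le> Q * (\<Sum>p\<in>P. \<bar>f p - g p\<bar>) + real (card P)"
    and "Q - Q * (\<Sum>p\<in>P. \<bar>f p - g p\<bar>) - 2 * real (card P) \<le> real (\<Sum>p\<in>P. min (k f p) (k g p))"
proof -
  have bounds: "Q * h p - 1 \<le> real (k h p)" "real (k h p) \<le> Q * h p" if "\<forall>p. 0 \<le> h p" for h p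
    unfolding k_def using nat_floor_bounds[of "Q * h p"] Q that by auto
  have Qdiff: "Q * \<bar>f p - g p\<bar> = \<bar>Q * f p - Q * g p\<bar>" for p
    using Q by (simp add: abs_mult right_diff_distrib[symmetric])
  have diff: "real ((k f p - k g p) + (k g p - k f p)) \<le> Q * \<bar>f p - g p\<bar> + 1" for p
    using bounds[OF f, of p] bounds[OF g, of p] unfolding Qdiff by linarith
  have "real (\<Sum>p\<in>P. (k f p - k g p) + (k g p - k f p)) \<le> (\<Sum>p\<in>P. Q * \<bar>f p - g p\<bar> + 1)"
    unfolding of_nat_sum by (intro sum_mono diff)
  then show "real (\<Sum>p\<in>P. (k f p - k g p) + (k g p - k f p))
      \<le> Q * (\<Sum>p\<in>P. \<bar>f p - g p\<bar>) + real (card P)"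
    by (simp add: sum.distrib sum_distrib_left)
  have "(\<Sum>p\<in>P. Q * f p - Q * \<bar>f p - g p\<bar> - 2) \<le> real (\<Sum>p\<in>P. min (k f p) (k g p))"
    unfolding of_nat_sum
  proof (intro sum_mono)
    fix p
    show "Q * f p - Q * \<bar>f p - g p\<bar> - 2 \<le> real (min (k f p) (k g p))"
      using bounds[OF f, of p] bounds[OF g, of p] unfolding Qdiff by linarith
  qed
  then show "Q - Q * (\<Sum>p\<in>P. \<bar>f p - g p\<bar>) - 2 * real (card P) \<le> real (\<Sum>p\<in>P. min (k f p) (k g p))"
    using mass_f by (simp add: sum_subtractf sum_distrib_left[symmetric])
qed

lemma card_symdiff_rounded_columns_lt:
  fixes f g :: "'a \<Rightarrow> real" and e :: real and M :: nat and a b :: "'a \<times> nat"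
  assumes P: "finite P" "card P \<le> 2 * M" and f: "\<forall>p. 0 \<le> f p" and g: "\<forall>p. 0 \<le> g p"
    and mass_f: "sum f P = 1" and close: "(\<Sum>p\<in>P. \<bar>f p - g p\<bar>) \<le> e / 4" and e: "0 < e" "e \<le> 1"
  defines "Q \<equiv> (4 + 12 * real M) / e + 1"
  defines "A \<equiv> insert a (columns P (\<lambda>p. nat \<lfloor>Q * f p\<rfloor>))"
    and "B \<equiv> insert b (columns P (\<lambda>p. nat \<lfloor>Q * g p\<rfloor>))"
  shows "real (card ((A - B) \<union> (B - A))) < e * real (card (A \<inter> B))"
proof -
  define k :: "('a \<Rightarrow> real) \<Rightarrow> 'a \<Rightarrow> nat" where "k h p = nat \<lfloor>Q * h p\<rfloor>" for h p
  have Q: "0 \<le> Q" using e by (simp add: Q_def)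
  have eQ: "e * Q = 4 + 12 * real M + e" using e by (simp add: Q_def field_simps)
  have card_P: "real (card P) \<le> 2 * real M" using P(2) by simp
  have Q_close: "Q * (\<Sum>p\<in>P. \<bar>f p - g p\<bar>) \<le> Q * (e / 4)" using close Q by (rule mult_left_mono)
  note est = rounding_estimates[OF P(1) Q f g mass_f, folded k_def]
  have "card ((A - B) \<union> (B - A)) \<le> 2 + (\<Sum>p\<in>P. (k f p - k g p) + (k g p - k f p))"
    unfolding A_def B_def k_def by (rule card_insert_columns_symdiff_le[OF P(1)])
  then have "real (card ((A - B) \<union> (B - A))) \<le> 2 + real (\<Sum>p\<in>P. (k f p - k g p) + (k g p - k f p))"
    by (metis of_nat_add of_nat_le_iff of_nat_numeral)
  then have "real (card ((A - B) \<union> (B - A))) \<le> 2 + (Q * (e / 4) + 2 * real M)"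
    using est(1) card_P Q_close by linarith
  also have "\<dots> = 3 + 5 * real M + e / 4"
    using eQ by (simp add: field_simps)
  also have "\<dots> < 3 / 4 * (e * Q) - 4 * real M"
    using eQ e by simp
  also have "\<dots> \<le> e * (Q - Q * (e / 4) - 4 * real M)"
  proof -
    have "e * (Q * (e / 4)) \<le> e * Q / 4" and "e * (4 * real M) \<le> 4 * real M"
      using e Q by (simp_all add: mult_left_le_one_le mult_right_le_one_le)
    then show ?thesis by (simp add: algebra_simps)
  qed
  also have "\<dots> \<le> e * real (card (A \<inter> B))"
  proof -
    have "(\<Sum>p\<in>P. min (k f p) (k g p)) \<le> card (A \<inter> B)"
      unfolding A_def B_def k_def by (rule card_insert_columns_Int_ge[OF P(1)])
    from of_nat_mono[OF this, where 'a = real]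
    have "Q - Q * (e / 4) - 4 * real M \<le> real (card (A \<inter> B))"
      using est(2) Q_close card_P by linarith
    then show ?thesis using e by (simp add: mult_left_mono)
  qed
  finally show ?thesis .
qed

lemma property_A_if_property_A_l1:
  assumes "property_A_l1 TYPE('a::metric_space)"
  shows "property_A TYPE('a)"
  unfolding property_A_def
proof (intro allI impI)
  fix R \<epsilon> :: real assume R: "0 < R" and \<epsilon>: "0 < \<epsilon>"
  define e where "e = min \<epsilon> 1"
  have e: "0 < e" "e \<le> 1" "e \<le> \<epsilon>" using \<epsilon> by (auto simp: e_def)
  obtain S M and \<xi> :: "'a \<Rightarrow> 'a \<Rightarrow> real" where S: "0 < S"
    and loc: "\<And>x. local_weight M S x (\<xi> x)" and mass: "\<And>x. mass (\<xi> x) = 1"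
    and var: "\<And>x y. dist x y < R \<Longrightarrow> l1_dist (\<xi> x) (\<xi> y) \<le> e / 4"
    using assms e(1) R unfolding property_A_l1_def by (metis divide_pos_pos zero_less_numeral)
  define Q where "Q = (4 + 12 * real M) / e + 1"
  define A where "A x = insert (x, 1) (columns (fsupp (\<xi> x)) (\<lambda>p. nat \<lfloor>Q * \<xi> x p\<rfloor>))" for x
  have A_basic: "finite (A x) \<and> A x \<noteq> {} \<and> (x, 1) \<in> A x \<and> A x \<subseteq> ball x S \<times> UNIV" for x
    using loc[of x] S by (auto simp: A_def columns_def local_weight_def)
  have A_close: "real (card ((A x - A y) \<union> (A y - A x))) < \<epsilon> * real (card (A x \<inter> A y))"
    if xy: "dist x y < R" for x y
  proof -
    define P where "P = fsupp (\<xi> x) \<union> fsupp (\<xi> y)"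
    have P: "finite P" "card P \<le> 2 * M"
      using loc[of x] loc[of y] card_Un_le[of "fsupp (\<xi> x)" "fsupp (\<xi> y)"]
      by (auto simp: P_def local_weight_def)
    have A_P: "A z = insert (z, 1) (columns P (\<lambda>p. nat \<lfloor>Q * \<xi> z p\<rfloor>))" if "fsupp (\<xi> z) \<subseteq> P" for z
      unfolding A_def using that
      by (intro arg_cong[where f = "insert _"] columns_superset[symmetric]) (auto simp: fsupp_def)
    have Ax: "A x = insert (x, 1) (columns P (\<lambda>p. nat \<lfloor>Q * \<xi> x p\<rfloor>))"
      and Ay: "A y = insert (y, 1) (columns P (\<lambda>p. nat \<lfloor>Q * \<xi> y p\<rfloor>))"
      by (rule A_P, simp add: P_def)+
    have "real (card ((A x - A y) \<union> (A y - A x))) < e * real (card (A x \<inter> A y))"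
      unfolding Ax Ay Q_def
    proof (rule card_symdiff_rounded_columns_lt[OF P])
      show "sum (\<xi> x) P = 1" using P mass[of x] by (simp add: sum_eq_mass P_def)
      show "(\<Sum>p\<in>P. \<bar>\<xi> x p - \<xi> y p\<bar>) \<le> e / 4" using var[OF xy] by (simp add: l1_dist_def P_def)
    qed (use e loc in \<open>auto simp: local_weight_def\<close>)
    also have "\<dots> \<le> \<epsilon> * real (card (A x \<inter> A y))" using e by (simp add: mult_right_mono)
    finally show ?thesis .
  qed
  show "\<exists>S>0. \<exists>A :: 'a \<Rightarrow> ('a \<times> nat) set.
    (\<forall>x. finite (A x) \<and> A x \<noteq> {} \<and> (x, 1) \<in> A x \<and> A x \<subseteq> ball x S \<times> UNIV) \<and>
    (\<forall>x y. dist x y < R \<longrightarrow>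
       real (card ((A x - A y) \<union> (A y - A x))) < \<epsilon> * real (card (A x \<inter> A y)))"
    using S A_basic A_close by blast
qed

section \<open>Separated nets in large scale doubling sets\<close>

lemma maximal_separated_subset:
  fixes U :: "'a::metric_space set"
  assumes t: "0 < t"
  obtains Y where "Y \<subseteq> U" "pairwise (\<lambda>a b. t \<le> dist a b) Y" "\<forall>u\<in>U. \<exists>y\<in>Y. dist u y < t"
proof -
  define \<A> where "\<A> = {Y. Y \<subseteq> U \<and> pairwise (\<lambda>a b. t \<le> dist a b) Y}"
  have "\<exists>M\<in>\<A>. \<forall>X\<in>\<A>. M \<subseteq> X \<longrightarrow> X = M"
  proof (rule subset_Zorn')
    fix C assume "subset.chain \<A> C"
    then have C: "C \<subseteq> \<A>" "chain\<^sub>\<subseteq> C"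
      unfolding subset_chain_def chain_subset_def by blast+
    have "\<Union>C \<subseteq> U" using C(1) unfolding \<A>_def by blast
    moreover have "pairwise (\<lambda>a b. t \<le> dist a b) (\<Union>C)"
      using C(1) unfolding \<A>_def by (intro pairwise_chain_Union[OF _ C(2)]) blast
    ultimately show "\<Union>C \<in> \<A>" unfolding \<A>_def by blast
  qed
  then obtain Y where "Y \<in> \<A>" and maximal: "\<And>X. X \<in> \<A> \<Longrightarrow> Y \<subseteq> X \<Longrightarrow> X = Y"
    by blast
  then have Y: "Y \<subseteq> U" "pairwise (\<lambda>a b. t \<le> dist a b) Y" unfolding \<A>_def by blast+
  have "\<exists>y\<in>Y. dist u y < t" if u: "u \<in> U" for u
  proof (rule ccontr)
    assume "\<not> (\<exists>y\<in>Y. dist u y < t)"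
    then have far: "\<forall>y\<in>Y. t \<le> dist u y" by auto
    then have "pairwise (\<lambda>a b. t \<le> dist a b) (insert u Y)"
      using Y(2) unfolding pairwise_insert by (simp add: dist_commute)
    then have "insert u Y \<in> \<A>" using Y(1) u unfolding \<A>_def by blast
    then have "insert u Y = Y" by (rule maximal) blast
    then show False using far t by (metis dist_self insertI1 not_le)
  qed
  with Y show thesis by (intro that) auto
qed

lemma card_separated_in_ball_le:
  fixes U Y :: "'a::metric_space set"
  assumes doubling: "ls_doubling N D U" and Y: "Y \<subseteq> U"
    and sep: "pairwise (\<lambda>a b. 2 * T \<le> dist a b) Y" and T: "0 < T" "D \<le> T"
  shows "finite (Y \<inter> ball z (2 ^ m * T)) \<and> card (Y \<inter> ball z (2 ^ m * T)) \<le> N ^ m"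
proof (induction m arbitrary: z)
  case 0
  have "a = b" if "a \<in> Y \<inter> ball z T" "b \<in> Y \<inter> ball z T" for a b
  proof (rule ccontr)
    assume "a \<noteq> b"
    then have "2 * T \<le> dist a b" using sep that by (auto simp: pairwise_def)
    moreover have "dist a b < 2 * T"
      using that dist_triangle[of a b z] by (auto simp: dist_commute)
    ultimately show False by simp
  qed
  then obtain a where "Y \<inter> ball z T \<subseteq> {a}"
    by (cases "Y \<inter> ball z T = {}") blast+
  then show ?case using finite_subset[of _ "{a}"] card_mono[of "{a}"] by auto
next
  case (Suc m)
  define r where "r = 2 ^ m * T"
  have "T \<le> r" using T mult_right_mono[of 1 "2 ^ m" T] by (simp add: r_def)
  then have "D \<le> r" using T by simp
  then obtain C where C: "finite C" "card C \<le> N" "ball z (2 * r) \<inter> U \<subseteq> (\<Union>c\<in>C. ball c r)"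
    using doubling unfolding ls_doubling_def by blast
  have cover: "Y \<inter> ball z (2 * r) \<subseteq> (\<Union>c\<in>C. Y \<inter> ball c r)" using C(3) Y by blast
  have fin: "finite (\<Union>c\<in>C. Y \<inter> ball c r)"
    using Suc.IH by (intro finite_UN_I[OF C(1)]) (simp add: r_def)
  have "card (Y \<inter> ball z (2 * r)) \<le> (\<Sum>c\<in>C. card (Y \<inter> ball c r))"
    using card_mono[OF fin cover] card_UN_le[OF C(1)] by (rule order_trans)
  also have "\<dots> \<le> card C * N ^ m"
    using sum_mono[of C "\<lambda>c. card (Y \<inter> ball c r)" "\<lambda>_. N ^ m"] Suc.IH by (simp add: r_def)
  also have "\<dots> \<le> N ^ Suc m" using C(2) by simp
  finally show ?case using finite_subset[OF cover fin] by (simp add: r_def mult.assoc)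
qed

section \<open>Layered weights on a net\<close>

lemma sum_shift_telescope:
  fixes a :: "nat \<Rightarrow> real" and l :: real
  assumes "l \<noteq> 0"
  shows "(\<Sum>k=1..K. (a (k + 1) - a (k - 1)) / l ^ k) =
    (l - 1 / l) * (\<Sum>k=1..K. a k / l ^ k) + a (K + 1) / l ^ K + a K / l ^ (K + 1) - a 1 - a 0 / l"
proof (induction K)
  case (Suc K)
  have shift: "(\<Sum>k=1..Suc K. (a (k + 1) - a (k - 1)) / l ^ k) =
      (\<Sum>k=1..K. (a (k + 1) - a (k - 1)) / l ^ k) + (a (K + 2) - a K) / l ^ (K + 1)"
    by simp
  have plain: "(\<Sum>k=1..Suc K. a k / l ^ k) = (\<Sum>k=1..K. a k / l ^ k) + a (K + 1) / l ^ (K + 1)"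
    by simp
  show ?case unfolding shift plain Suc.IH using assms by (simp add: field_simps)
qed simp

definition weights_near ::
    "'a::metric_space set \<Rightarrow> nat \<Rightarrow> real \<Rightarrow> real \<Rightarrow> real \<Rightarrow> real \<Rightarrow> ('a \<Rightarrow> 'a \<Rightarrow> real) \<Rightarrow> bool" where
  "weights_near U M S L R \<delta> \<xi> \<longleftrightarrow>
     (\<forall>x. local_weight M S x (\<xi> x)) \<and>
     (\<forall>x. infdist x U < L \<longrightarrow> mass (\<xi> x) = 1) \<and>
     (\<forall>x y. infdist x U < L \<longrightarrow> dist x y < R \<longrightarrow> l1_dist (\<xi> x) (\<xi> y) \<le> \<delta>)"

lemma weights_near_mono:
  assumes "weights_near U M S L R \<delta> \<xi>" "S \<le> S'" "L' \<le> L" "R' \<le> R" "\<delta> \<le> \<delta>'"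
  shows "weights_near U M S' L' R' \<delta>' \<xi>"
proof -
  have "local_weight M S' x (\<xi> x)" for x
    using assms(1) subset_ball[OF assms(2), of x] by (auto simp: weights_near_def local_weight_def)
  then show ?thesis
    using assms unfolding weights_near_def by (meson order_less_le_trans order_trans)
qed

locale layered_net =
  fixes Y :: "'a::metric_space set" and T l :: real and K B :: nat
  assumes T_pos: "0 < T" and l_gt_1: "1 < l"
    and finite_outer: "\<And>z. finite (Y \<inter> ball z (real (K + 1) * T))"
    and card_outer: "\<And>z. card (Y \<inter> ball z (real (K + 1) * T)) \<le> B"
begin

abbreviation layer :: "'a \<Rightarrow> nat \<Rightarrow> 'a set" where
  "layer z k \<equiv> Y \<inter> ball z (real k * T)"

definition weight :: "'a \<Rightarrow> 'a \<Rightarrow> real" where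
  "weight z p = (\<Sum>k=1..K. indicator (layer z k) p / l ^ k)"

lemma layer_mono:
  assumes "j \<le> k"
  shows "layer z j \<subseteq> layer z k"
proof -
  have "real j * T \<le> real k * T" using assms T_pos by (simp add: mult_right_mono)
  then show ?thesis by auto
qed

lemma finite_layer: "k \<le> K + 1 \<Longrightarrow> finite (layer z k)"
  by (rule finite_subset[OF layer_mono finite_outer])

lemma weight_nonneg: "0 \<le> weight z p"
  using l_gt_1 by (auto simp: weight_def intro!: sum_nonneg)

lemma fsupp_weight: "fsupp (weight z) \<subseteq> layer z K"
proof
  fix p assume "p \<in> fsupp (weight z)"
  then obtain k where k: "k \<in> {1..K}" and "indicator (layer z k) p / l ^ k \<noteq> (0::real)"
    unfolding fsupp_def weight_def mem_Collect_eq by (rule sum.not_neutral_contains_not_neutral)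
  then have "p \<in> layer z k" by (simp add: indicator_def split: if_splits)
  then show "p \<in> layer z K" using layer_mono[of k K z] k by auto
qed

lemma local_weight_weight: "local_weight B (real K * T) z (weight z)"
proof -
  have sub: "fsupp (weight z) \<subseteq> Y \<inter> ball z (real (K + 1) * T)"
    by (rule subset_trans[OF fsupp_weight layer_mono]) simp
  then have "finite (fsupp (weight z))" by (rule finite_subset[OF _ finite_outer])
  moreover have "card (fsupp (weight z)) \<le> B"
    using card_mono[OF finite_outer sub] card_outer[of z] by (rule le_trans)
  moreover have "fsupp (weight z) \<subseteq> ball z (real K * T)" using fsupp_weight by blast
  ultimately show ?thesis by (simp add: local_weight_def weight_nonneg)
qed

lemma sum_indicator_layer:
  assumes "finite P" "layer z k \<subseteq> P"
  shows "(\<Sum>p\<in>P. indicator (layer z k) p) = real (card (layer z k))"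
proof -
  have "(\<Sum>p\<in>P. indicator (layer z k) p) = (\<Sum>p\<in>layer z k. 1 :: real)"
    using assms by (intro sum.mono_neutral_cong_right) (auto simp: indicator_def)
  then show ?thesis by simp
qed

lemma sum_weight:
  assumes "finite P" "layer z K \<subseteq> P"
  shows "(\<Sum>p\<in>P. weight z p) = (\<Sum>k=1..K. card (layer z k) / l ^ k)"
proof -
  have "(\<Sum>p\<in>P. weight z p) = (\<Sum>k=1..K. (\<Sum>p\<in>P. indicator (layer z k) p) / l ^ k)"
    unfolding weight_def by (simp add: sum.swap[of _ P] sum_divide_distrib)
  also have "\<dots> = (\<Sum>k=1..K. card (layer z k) / l ^ k)"
  proof (intro sum.cong refl)
    fix k assume "k \<in> {1..K}"
    then have "layer z k \<subseteq> P" using assms(2) layer_mono[of k K z] by auto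
    then show "(\<Sum>p\<in>P. indicator (layer z k) p) / l ^ k = card (layer z k) / l ^ k"
      using assms(1) by (simp add: sum_indicator_layer)
  qed
  finally show ?thesis .
qed

lemma mass_weight: "mass (weight z) = (\<Sum>k=1..K. card (layer z k) / l ^ k)"
  using sum_weight[OF finite_layer] sum_eq_mass[OF finite_layer fsupp_weight] by simp

lemma mass_weight_ge:
  assumes "3 \<le> K" "y \<in> Y" "dist z y < 3 * T"
  shows "1 / l ^ 3 \<le> mass (weight z)"
proof -
  have "1 \<le> card (layer z 3)"
    using assms finite_layer[of 3 z] by (auto simp: card_gt_0_iff Suc_le_eq)
  then have "1 / l ^ 3 \<le> card (layer z 3) / l ^ 3"
    using l_gt_1 by (simp add: divide_right_mono)
  also have "\<dots> \<le> (\<Sum>k=1..K. card (layer z k) / l ^ k)"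
    using assms(1) l_gt_1
    by (intro member_le_sum[of 3 "{1..K}" "\<lambda>k. card (layer z k) / l ^ k"]) auto
  finally show ?thesis by (simp add: mass_weight)
qed

lemma indicator_layer_diff_le:
  assumes "dist x y < T" "1 \<le> k"
  shows "\<bar>indicator (layer x k) p - indicator (layer y k) p\<bar>
    \<le> indicator (layer x (k + 1)) p - (indicator (layer x (k - 1)) p :: real)"
proof -
  have "dist y p \<le> dist x p + dist x y" "dist x p \<le> dist y p + dist x y"
    using dist_triangle[of y p x] dist_triangle[of x p y] by (simp_all add: dist_commute)
  moreover have "real (k - 1) * T = real k * T - T" "real (k + 1) * T = real k * T + T"
    using assms(2) by (simp_all add: of_nat_diff algebra_simps)
  ultimately show ?thesis using assms(1) by (auto split: split_indicator)
qed

lemma abs_weight_diff_le: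
  assumes "dist x y < T"
  shows "\<bar>weight x p - weight y p\<bar>
    \<le> (\<Sum>k=1..K. (indicator (layer x (k + 1)) p - indicator (layer x (k - 1)) p) / l ^ k)"
proof -
  have "\<bar>weight x p - weight y p\<bar>
      \<le> (\<Sum>k=1..K. \<bar>(indicator (layer x k) p - indicator (layer y k) p) / l ^ k\<bar>)"
    unfolding weight_def sum_subtractf[symmetric] diff_divide_distrib[symmetric] by (rule sum_abs)
  also have "\<dots> \<le> (\<Sum>k=1..K. (indicator (layer x (k + 1)) p - indicator (layer x (k - 1)) p) / l ^ k)"
    using indicator_layer_diff_le[OF assms] l_gt_1
    by (intro sum_mono) (simp add: abs_divide divide_right_mono)
  finally show ?thesis .
qed

lemma sum_shifted_layers_le:
  "(\<Sum>k=1..K. (real (card (layer x (k + 1))) - real (card (layer x (k - 1)))) / l ^ k)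
    \<le> (l - 1 / l) * mass (weight x) + 2 * real B / l ^ K"
proof -
  define c where "c k = real (card (layer x k))" for k
  have "mass (weight x) = (\<Sum>k=1..K. c k / l ^ k)" by (simp add: mass_weight c_def)
  then have "(\<Sum>k=1..K. (c (k + 1) - c (k - 1)) / l ^ k)
      = (l - 1 / l) * mass (weight x) + c (K + 1) / l ^ K + c K / l ^ (K + 1) - c 1 - c 0 / l"
    using sum_shift_telescope[of l c K] l_gt_1 by simp
  moreover have "c (K + 1) / l ^ K + c K / l ^ (K + 1) \<le> 2 * real B / l ^ K"
  proof -
    have "card (layer x K) \<le> card (layer x (K + 1))"
      by (rule card_mono[OF finite_layer layer_mono]) simp_all
    then have "c K \<le> c (K + 1)" by (simp add: c_def)
    moreover have "c (K + 1) \<le> B" using card_outer[of x] by (simp add: c_def)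
    moreover have "c K / l ^ (K + 1) \<le> c K / l ^ K"
      using l_gt_1 by (intro divide_left_mono) (auto simp: c_def)
    ultimately have "c (K + 1) / l ^ K \<le> B / l ^ K" "c K / l ^ K \<le> B / l ^ K"
      using l_gt_1 by (simp_all add: divide_right_mono)
    moreover have "2 * real B / l ^ K = B / l ^ K + B / l ^ K" by simp
    ultimately show ?thesis using \<open>c K / l ^ (K + 1) \<le> c K / l ^ K\<close> by linarith
  qed
  moreover have "0 \<le> c 1" "c 0 = 0" by (simp_all add: c_def)
  ultimately show ?thesis unfolding c_def by simp
qed

lemma l1_dist_weight_le:
  assumes xy: "dist x y < T"
  shows "l1_dist (weight x) (weight y) \<le> (l - 1 / l) * mass (weight x) + 2 * real B / l ^ K"
proof -
  define P where "P = Y \<inter> ball x (real (K + 1) * T)"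
  have P: "finite P" using finite_outer by (simp add: P_def)
  have layer_P: "layer x k \<subseteq> P" if "k \<le> K + 1" for k
    using layer_mono[OF that] by (simp add: P_def)
  have "layer y K \<subseteq> P"
  proof
    fix p assume p: "p \<in> layer y K"
    have "dist x p \<le> dist x y + dist y p" by (rule dist_triangle)
    also have "\<dots> < real (K + 1) * T" using p xy by (simp add: algebra_simps)
    finally show "p \<in> P" using p by (simp add: P_def)
  qed
  moreover have "layer x K \<subseteq> P" by (rule layer_P) simp
  ultimately have "l1_dist (weight x) (weight y) = (\<Sum>p\<in>P. \<bar>weight x p - weight y p\<bar>)"
    using fsupp_weight by (intro l1_dist_eq_sum[OF P]) (meson subset_trans)+
  also have "\<dots> \<le> (\<Sum>p\<in>P. \<Sum>k=1..K.
      (indicator (layer x (k + 1)) p - indicator (layer x (k - 1)) p) / l ^ k)"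
    using abs_weight_diff_le[OF xy] by (rule sum_mono)
  also have "\<dots> = (\<Sum>k=1..K. \<Sum>p\<in>P.
      (indicator (layer x (k + 1)) p - indicator (layer x (k - 1)) p) / l ^ k)"
    by (rule sum.swap)
  also have "\<dots> = (\<Sum>k=1..K. (real (card (layer x (k + 1))) - real (card (layer x (k - 1)))) / l ^ k)"
  proof (intro sum.cong refl)
    fix k assume k: "k \<in> {1..K}"
    have outer: "layer x (k + 1) \<subseteq> P" and inner: "layer x (k - 1) \<subseteq> P"
      using k by (intro layer_P; auto)+
    show "(\<Sum>p\<in>P. (indicator (layer x (k + 1)) p - indicator (layer x (k - 1)) p) / l ^ k)
        = (real (card (layer x (k + 1))) - real (card (layer x (k - 1)))) / l ^ k"
      using sum_indicator_layer[OF P outer] sum_indicator_layer[OF P inner]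
      by (simp add: sum_divide_distrib[symmetric] sum_subtractf)
  qed
  also have "\<dots> \<le> (l - 1 / l) * mass (weight x) + 2 * real B / l ^ K"
    by (rule sum_shifted_layers_le)
  finally show ?thesis .
qed

definition normalized_weight :: "'a \<Rightarrow> 'a \<Rightarrow> real" where
  "normalized_weight z p = weight z p / mass (weight z)"

lemma l1_dist_normalized_weight_le:
  assumes "3 \<le> K" "y0 \<in> Y" "dist x y0 < 3 * T" "dist x y < T"
  shows "l1_dist (normalized_weight x) (normalized_weight y)
    \<le> 2 * (l - 1 / l) + 4 * real B * l ^ 3 / l ^ K"
proof -
  have m: "1 / l ^ 3 \<le> mass (weight x)" by (rule mass_weight_ge[OF assms(1-3)])
  have m_pos: "0 < mass (weight x)" using l_gt_1 by (intro order_less_le_trans[OF _ m]) simp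
  have "l1_dist (normalized_weight x) (normalized_weight y)
      \<le> 2 * l1_dist (weight x) (weight y) / mass (weight x)"
    unfolding normalized_weight_def using local_weight_weight weight_nonneg m_pos
    by (intro l1_dist_normalize_le) (auto simp: local_weight_def)
  also have "\<dots> \<le> 2 * ((l - 1 / l) * mass (weight x) + 2 * real B / l ^ K) / mass (weight x)"
    using l1_dist_weight_le[OF assms(4)] m_pos by (simp add: divide_right_mono)
  also have "\<dots> = 2 * (l - 1 / l) + 4 * real B / l ^ K * (1 / mass (weight x))"
    using m_pos by (simp add: field_simps)
  also have "\<dots> \<le> 2 * (l - 1 / l) + 4 * real B / l ^ K * l ^ 3"
    using m m_pos l_gt_1 by (intro add_left_mono mult_left_mono) (simp_all add: field_simps)
  finally show ?thesis by simp
qed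

lemma weights_near_normalized_weight:
  assumes K: "3 \<le> K" and net: "\<And>x. infdist x U < L \<Longrightarrow> \<exists>y\<in>Y. dist x y < 3 * T"
  shows "weights_near U B (real K * T) L T (2 * (l - 1 / l) + 4 * real B * l ^ 3 / l ^ K)
    normalized_weight"
proof -
  have "local_weight B (real K * T) x (normalized_weight x)" for x
  proof (rule local_weight_mono[OF local_weight_weight])
    show "\<forall>p. 0 \<le> normalized_weight x p"
      by (simp add: normalized_weight_def weight_nonneg mass_nonneg)
    show "fsupp (normalized_weight x) \<subseteq> fsupp (weight x)"
      by (auto simp: fsupp_def normalized_weight_def)
  qed
  moreover have "mass (normalized_weight x) = 1" if near: "infdist x U < L" for x
  proof -
    obtain y0 where "y0 \<in> Y" "dist x y0 < 3 * T" using net[OF near] by blast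
    then have "1 / l ^ 3 \<le> mass (weight x)" by (rule mass_weight_ge[OF K])
    moreover have "0 < 1 / l ^ 3" using l_gt_1 by simp
    ultimately have "mass (weight x) \<noteq> 0" by linarith
    then show ?thesis unfolding normalized_weight_def by (rule mass_normalize)
  qed
  moreover have "l1_dist (normalized_weight x) (normalized_weight y)
      \<le> 2 * (l - 1 / l) + 4 * real B * l ^ 3 / l ^ K" if "infdist x U < L" "dist x y < T" for x y
    using net[OF that(1)] l1_dist_normalized_weight_le[OF K _ _ that(2)] by blast
  ultimately show ?thesis unfolding weights_near_def by blast
qed

end

section \<open>Weights near a large scale doubling set\<close>

lemma infdist_less_obtain:
  assumes "infdist x A < r" "A \<noteq> {}"
  obtains a where "a \<in> A" "dist x a < r"
proof -
  have "Inf ((\<lambda>a. dist x a) ` A) < r" using assms by (simp add: infdist_notempty)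
  with assms(2) obtain d where "d \<in> (\<lambda>a. dist x a) ` A" "d < r"
    by (metis cInf_lessD image_is_empty)
  then show thesis using that by blast
qed

lemma exists_power_le_double_exponential:
  fixes l c :: real
  assumes l: "1 < l" and c: "0 < c"
  shows "\<exists>m\<ge>2. real N ^ m / l ^ 2 ^ m \<le> c"
proof -
  obtain n where n: "2 * (real N + 1) < l ^ n" using real_arch_pow[OF l] by blast
  obtain k0 where k0: "(real N + 1) ^ n / c < 2 ^ k0" using real_arch_pow[of 2] by auto
  define k where "k = k0 + 2"
  have "n * k \<le> 2 ^ n * 2 ^ k"
    using less_exp[of n] less_exp[of k] by (intro mult_le_mono) auto
  then have "l ^ (n * k) \<le> l ^ 2 ^ (n + k)"
    using l by (intro power_increasing) (auto simp: power_add)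
  moreover have "(2 * (real N + 1)) ^ k \<le> l ^ (n * k)"
    unfolding power_mult using n by (intro power_mono) auto
  ultimately have denom: "2 ^ k * (real N + 1) ^ k \<le> l ^ 2 ^ (n + k)"
    by (metis power_mult_distrib order_trans)
  have num: "real N ^ (n + k) \<le> (real N + 1) ^ n * (real N + 1) ^ k"
    unfolding power_add[symmetric] by (intro power_mono) auto
  have "real N ^ (n + k) / l ^ 2 ^ (n + k)
      \<le> (real N + 1) ^ n * (real N + 1) ^ k / (2 ^ k * (real N + 1) ^ k)"
    using num denom l by (intro frac_le) auto
  also have "\<dots> = (real N + 1) ^ n / 2 ^ k" by simp
  also have "\<dots> \<le> c"
  proof -
    have "(real N + 1) ^ n < c * 2 ^ k0" using k0 c by (simp add: field_simps)
    also have "\<dots> \<le> c * 2 ^ k" using c by (simp add: k_def)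
    finally show ?thesis by (simp add: field_simps)
  qed
  finally show ?thesis by (intro exI[of _ "n + k"]) (simp add: k_def)
qed

lemma layered_error_le:
  fixes \<delta> l :: real and N m K :: nat
  assumes \<delta>: "0 < \<delta>" and l: "l = 1 + \<delta> / 8" and K: "2 ^ m = K + 1"
    and small: "real N ^ m / l ^ 2 ^ m \<le> \<delta> / (8 * l ^ 4)"
  shows "2 * (l - 1 / l) + 4 * real (N ^ m) * l ^ 3 / l ^ K \<le> \<delta>"
proof -
  have l_pos: "0 < l" using l \<delta> by simp
  have "0 \<le> (l - 1) * (l - 1)" by simp
  then have "l * 2 \<le> 1 + l * l" by (simp add: algebra_simps)
  then have "l - 1 / l \<le> 2 * (l - 1)" using l_pos by (simp add: field_simps)
  then have "2 * (l - 1 / l) \<le> \<delta> / 2" by (simp add: l)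
  moreover have "4 * real (N ^ m) * l ^ 3 / l ^ K \<le> \<delta> / 2"
  proof -
    have "l ^ 2 ^ m = l ^ K * l" by (simp add: K)
    then have "4 * real (N ^ m) * l ^ 3 / l ^ K = 4 * l ^ 4 * (real N ^ m / l ^ 2 ^ m)"
      using l_pos by (simp add: field_simps eval_nat_numeral)
    also have "\<dots> \<le> 4 * l ^ 4 * (\<delta> / (8 * l ^ 4))"
      using small l_pos by (intro mult_left_mono) auto
    also have "\<dots> = \<delta> / 2" using l_pos by simp
    finally show ?thesis .
  qed
  ultimately show ?thesis by simp
qed

lemma ls_doubling_weights_near:
  fixes N :: nat and D L R \<delta> :: real
  assumes L: "0 < L" and R: "0 < R" and \<delta>: "0 < \<delta>"
  obtains S M where "0 < S"
    "\<And>U :: 'a::metric_space set. ls_doubling N D U \<Longrightarrow> U \<noteq> {} \<Longrightarrow> \<exists>\<xi>. weights_near U M S L R \<delta> \<xi>"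
proof -
  \<comment> \<open>the doubling condition applies at every radius \<open>2\<^sup>k T\<close>, and points within L of U lie
    within 3T of the net\<close>
  define T where "T = max D (max L R)"
  have T: "0 < T" "D \<le> T" "L \<le> T" "R \<le> T" using L by (auto simp: T_def)
  define l where "l = 1 + \<delta> / 8"
  have l: "1 < l" using \<delta> by (simp add: l_def)
  obtain m where m: "2 \<le> m" and small: "real N ^ m / l ^ 2 ^ m \<le> \<delta> / (8 * l ^ 4)"
    using exists_power_le_double_exponential[OF l, of "\<delta> / (8 * l ^ 4)"] \<delta> l by auto
  define K :: nat where "K = 2 ^ m - 1"
  have "(2::nat) ^ 2 \<le> 2 ^ m" using m by (intro power_increasing) auto
  then have K_nat: "2 ^ m = K + 1" and K: "3 \<le> K" by (simp_all add: K_def)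
  then have K_real: "real (K + 1) = 2 ^ m" by (metis of_nat_numeral of_nat_power)
  define S where "S = 2 ^ m * T"
  have KS: "real K * T \<le> S"
    unfolding S_def K_real[symmetric] using T(1) by (simp add: algebra_simps)
  have main: "\<exists>\<xi>. weights_near U (N ^ m) S L R \<delta> \<xi>" if doubling: "ls_doubling N D U" and U: "U \<noteq> {}"
    for U :: "'a set"
  proof -
    obtain Y where Y: "Y \<subseteq> U" "pairwise (\<lambda>a b. 2 * T \<le> dist a b) Y"
      and net: "\<forall>u\<in>U. \<exists>y\<in>Y. dist u y < 2 * T"
      using maximal_separated_subset[of "2 * T" U] T by auto
    interpret layered_net Y T l K "N ^ m"
      using T l card_separated_in_ball_le[OF doubling Y T(1,2)] K_real by unfold_locales auto
    have "\<exists>y\<in>Y. dist x y < 3 * T" if near: "infdist x U < L" for x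
    proof -
      obtain u where "u \<in> U" "dist x u < L" using infdist_less_obtain[OF near U] by blast
      moreover obtain y where "y \<in> Y" "dist u y < 2 * T" using net \<open>u \<in> U\<close> by blast
      ultimately show ?thesis using T(3) dist_triangle[of x y u] by (intro bexI[of _ y]) auto
    qed
    then have "weights_near U (N ^ m) (real K * T) L T
        (2 * (l - 1 / l) + 4 * real (N ^ m) * l ^ 3 / l ^ K) normalized_weight"
      by (rule weights_near_normalized_weight[OF K])
    moreover have "2 * (l - 1 / l) + 4 * real (N ^ m) * l ^ 3 / l ^ K \<le> \<delta>"
      using \<delta> l_def K_nat small by (rule layered_error_le)
    ultimately have "weights_near U (N ^ m) S L R \<delta> normalized_weight"
      using KS T(4) by (elim weights_near_mono) auto
    then show ?thesis by blast
  qed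
  have "0 < S" using T by (simp add: S_def)
  then show thesis using main by (rule that)
qed

section \<open>Gluing the weights along the families of the cover\<close>

lemma set_dist_le_dist:
  assumes "a \<in> A" "b \<in> B"
  shows "set_dist A B \<le> dist a b"
  unfolding set_dist_def
proof (rule cInf_lower)
  show "dist a b \<in> {dist a b |a b. a \<in> A \<and> b \<in> B}" using assms by blast
  show "bdd_below {dist a b |a b. a \<in> A \<and> b \<in> B}" by (rule bdd_belowI[of _ 0]) auto
qed

lemma R_disjoint_near_unique:
  assumes disj: "R_disjoint (3 * L) \<U>" and UV: "U \<in> \<U>" "V \<in> \<U>"
    and near: "infdist x U < L" "infdist y V < L" and xy: "dist x y \<le> L"
  shows "U = V"
proof (rule ccontr)
  assume "U \<noteq> V"
  then have far: "3 * L < set_dist U V" using disj UV by (simp add: R_disjoint_def)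
  have ne: "U \<noteq> {}" "V \<noteq> {}" using disj UV by (auto simp: R_disjoint_def)
  obtain a where a: "a \<in> U" "dist x a < L" using infdist_less_obtain[OF near(1) ne(1)] .
  obtain b where b: "b \<in> V" "dist y b < L" using infdist_less_obtain[OF near(2) ne(2)] .
  have "dist a b \<le> dist a x + dist x b" by (rule dist_triangle)
  moreover have "dist x b \<le> dist x y + dist y b" by (rule dist_triangle)
  moreover have "dist a x = dist x a" by (rule dist_commute)
  ultimately have "set_dist U V < 3 * L"
    using set_dist_le_dist[OF a(1) b(1)] a(2) b(2) xy by linarith
  with far show False by simp
qed

definition cutoff :: "real \<Rightarrow> 'a::metric_space set \<Rightarrow> 'a \<Rightarrow> real" where
  "cutoff L U x = max 0 (1 - infdist x U / L)"

lemma cutoff_le_one: "0 < L \<Longrightarrow> cutoff L U x \<le> 1"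
  using infdist_nonneg[of x U] by (simp add: cutoff_def)

lemma cutoff_eq_zero: "0 < L \<Longrightarrow> L \<le> infdist x U \<Longrightarrow> cutoff L U x = 0"
  by (simp add: cutoff_def)

lemma cutoff_lipschitz:
  assumes "0 < L"
  shows "\<bar>cutoff L U x - cutoff L U y\<bar> \<le> dist x y / L"
proof -
  have "\<bar>(1 - infdist x U / L) - (1 - infdist y U / L)\<bar> = \<bar>infdist x U - infdist y U\<bar> / L"
    using assms by (simp add: diff_divide_distrib[symmetric] abs_minus_commute)
  also have "\<dots> \<le> dist x y / L"
    using assms infdist_triangle_abs[of x U y] by (simp add: divide_right_mono)
  finally show ?thesis unfolding cutoff_def by linarith
qed

definition cutoff_weight :: "real \<Rightarrow> 'a::metric_space set \<Rightarrow> ('a \<Rightarrow> 'a \<Rightarrow> real) \<Rightarrow> 'a \<Rightarrow> 'a \<Rightarrow> real" where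
  "cutoff_weight L U \<xi> z = (\<lambda>p. cutoff L U z * \<xi> z p)"

lemma cutoff_weight_far:
  "0 < L \<Longrightarrow> L \<le> infdist z U \<Longrightarrow> cutoff_weight L U \<xi> z = (\<lambda>_. 0)"
  by (simp add: cutoff_weight_def cutoff_eq_zero fun_eq_iff)

lemma local_weight_cutoff_weight:
  assumes "weights_near U M S L R \<delta> \<xi>" "0 < L"
  shows "local_weight M S z (cutoff_weight L U \<xi> z)"
proof (rule local_weight_mono)
  show "local_weight M S z (\<xi> z)" using assms(1) by (simp add: weights_near_def)
  then show "\<forall>p. 0 \<le> cutoff_weight L U \<xi> z p"
    by (simp add: cutoff_weight_def cutoff_def local_weight_def)
qed (auto simp: fsupp_def cutoff_weight_def)

lemma mass_cutoff_weight:
  assumes "weights_near U M S L R \<delta> \<xi>" "0 < L"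
  shows "mass (cutoff_weight L U \<xi> z) = cutoff L U z"
proof (cases "infdist z U < L")
  case True
  then show ?thesis using assms(1) by (simp add: cutoff_weight_def mass_scale weights_near_def)
next
  case False
  then show ?thesis
    using assms(2) by (simp add: cutoff_weight_far cutoff_eq_zero mass_def fsupp_def)
qed

lemma l1_dist_cutoff_weight_le:
  assumes \<xi>: "weights_near U M S L R \<delta> \<xi>" and R: "0 < R" "R \<le> L" and \<delta>: "0 \<le> \<delta>"
    and xy: "dist x y < R"
  shows "l1_dist (cutoff_weight L U \<xi> x) (cutoff_weight L U \<xi> y) \<le> R / L + \<delta>"
proof -
  have L: "0 < L" using R by simp
  note w = local_weight_cutoff_weight[OF \<xi> L] mass_cutoff_weight[OF \<xi> L]
  have c: "0 \<le> cutoff L U z" "cutoff L U z \<le> 1" for z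
    using cutoff_le_one[OF L] by (simp_all add: cutoff_def)
  have "dist x y / L \<le> R / L" using xy L by (simp add: divide_right_mono)
  then have c_close: "\<bar>cutoff L U x - cutoff L U y\<bar> \<le> R / L"
    using cutoff_lipschitz[OF L, of U x y] by linarith
  show ?thesis
  proof (cases "infdist x U < L \<and> infdist y U < L")
    case True
    have loc: "local_weight M S z (\<xi> z)" for z using \<xi> by (simp add: weights_near_def)
    have "l1_dist (cutoff_weight L U \<xi> x) (cutoff_weight L U \<xi> y)
        \<le> \<bar>cutoff L U x - cutoff L U y\<bar> * mass (\<xi> y) + cutoff L U x * l1_dist (\<xi> x) (\<xi> y)"
      unfolding cutoff_weight_def using loc c
      by (intro l1_dist_scale_le) (auto simp: local_weight_def)
    also have "\<dots> \<le> R / L * 1 + 1 * \<delta>"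
    proof (rule add_mono)
      show "\<bar>cutoff L U x - cutoff L U y\<bar> * mass (\<xi> y) \<le> R / L * 1"
        using \<xi> True c_close by (simp add: weights_near_def)
      have "l1_dist (\<xi> x) (\<xi> y) \<le> \<delta>" using \<xi> True xy by (simp add: weights_near_def)
      then show "cutoff L U x * l1_dist (\<xi> x) (\<xi> y) \<le> 1 * \<delta>"
        using c \<delta> by (intro mult_mono) (simp_all add: l1_dist_nonneg)
    qed
    finally show ?thesis by simp
  next
    case False
    \<comment> \<open>one of the two weights vanishes, and the l1 distance is the mass of the other\<close>
    then consider "L \<le> infdist x U" | "L \<le> infdist y U" by linarith
    then have "l1_dist (cutoff_weight L U \<xi> x) (cutoff_weight L U \<xi> y)
        = \<bar>cutoff L U x - cutoff L U y\<bar>"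
    proof cases
      case 1
      have "l1_dist (cutoff_weight L U \<xi> x) (cutoff_weight L U \<xi> y) = mass (cutoff_weight L U \<xi> y)"
        unfolding cutoff_weight_far[OF L 1] l1_dist_commute[of "\<lambda>_. 0"]
        using w(1) by (intro l1_dist_zero_right) (simp add: local_weight_def)
      then show ?thesis using w(2) cutoff_eq_zero[OF L 1] c by simp
    next
      case 2
      have "l1_dist (cutoff_weight L U \<xi> x) (cutoff_weight L U \<xi> y) = mass (cutoff_weight L U \<xi> x)"
        unfolding cutoff_weight_far[OF L 2] using w(1)
        by (intro l1_dist_zero_right) (simp add: local_weight_def)
      then show ?thesis using w(2) cutoff_eq_zero[OF L 2] c by simp
    qed
    then show ?thesis using c_close \<delta> by simp
  qed
qed

lemma R_disjoint_family_weights: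
  fixes \<U> :: "'a::metric_space set set"
  assumes disj: "R_disjoint (3 * L) \<U>" and R: "0 < R" "R \<le> L" and \<delta>: "0 \<le> \<delta>"
    and weights: "\<And>U. U \<in> \<U> \<Longrightarrow> \<exists>\<xi>. weights_near U M S L R \<delta> \<xi>"
  shows "\<exists>t. (\<forall>x. local_weight M S x (t x) \<and> (x \<in> \<Union>\<U> \<longrightarrow> mass (t x) = 1)) \<and>
    (\<forall>x y. dist x y < R \<longrightarrow> l1_dist (t x) (t y) \<le> R / L + \<delta>)"
proof -
  obtain \<Xi> where \<Xi>: "\<And>U. U \<in> \<U> \<Longrightarrow> weights_near U M S L R \<delta> (\<Xi> U)"
    using bchoice[of \<U> "\<lambda>U \<xi>. weights_near U M S L R \<delta> \<xi>"] weights by blast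
  have L: "0 < L" using R by simp
  define w where "w U = cutoff_weight L U (\<Xi> U)" for U
  define near where "near x \<longleftrightarrow> (\<exists>U\<in>\<U>. infdist x U < L)" for x
  define V where "V x = (SOME U. U \<in> \<U> \<and> infdist x U < L)" for x
  define t where "t x = (if near x then w (V x) x else (\<lambda>_. 0))" for x
  have V: "V x \<in> \<U>" "infdist x (V x) < L" if "near x" for x
    using someI_ex[of "\<lambda>U. U \<in> \<U> \<and> infdist x U < L"] that by (auto simp: near_def V_def)
  \<comment> \<open>by disjointness, around a point near a member V, t is the cut-off weight of V alone\<close>
  have t_near: "t y = w (V x) y" if x: "near x" and xy: "dist x y \<le> L" for x y
  proof (cases "near y")
    case True
    have "dist y x \<le> L" using xy dist_commute[of y x] by simp
    then have "V y = V x"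
      by (rule R_disjoint_near_unique[OF disj V(1)[OF True] V(1)[OF x] V(2)[OF True] V(2)[OF x]])
    then show ?thesis using True by (simp add: t_def)
  next
    case False
    then have "L \<le> infdist y (V x)" using V(1)[OF x] by (auto simp: near_def not_less)
    then show ?thesis using False by (simp add: t_def w_def cutoff_weight_far[OF L])
  qed
  have "local_weight M S x (t x)" for x
    by (cases "near x")
      (simp_all add: t_def w_def local_weight_cutoff_weight[OF \<Xi>[OF V(1)] L] local_weight_zero)
  moreover have "mass (t x) = 1" if x: "x \<in> \<Union>\<U>" for x
  proof -
    obtain U where U: "U \<in> \<U>" "x \<in> U" using x by blast
    then have "near x" using L unfolding near_def by (intro bexI[of _ U]) simp_all
    have "V x = U"
      using R_disjoint_near_unique[OF disj V(1)[OF \<open>near x\<close>] U(1) V(2)[OF \<open>near x\<close>], of x] U(2) L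
      by simp
    then have "t x = w U x" using \<open>near x\<close> by (simp add: t_def)
    then show ?thesis using \<Xi>[OF U(1)] U L by (simp add: w_def mass_cutoff_weight cutoff_def)
  qed
  moreover have "l1_dist (t x) (t y) \<le> R / L + \<delta>" if xy: "dist x y < R" for x y
  proof -
    have xy_L: "dist x y \<le> L" and yx_L: "dist y x \<le> L" using xy R dist_commute[of y x] by simp_all
    consider "near x" | "\<not> near x" "near y" | "\<not> near x" "\<not> near y" by blast
    then show ?thesis
    proof cases
      case 1
      have "t x = w (V x) x" using 1 by (simp add: t_def)
      moreover have "t y = w (V x) y" by (rule t_near[OF 1 xy_L])
      ultimately show ?thesis using l1_dist_cutoff_weight_le[OF \<Xi>[OF V(1)[OF 1]] R \<delta> xy]
        by (simp add: w_def)
    next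
      case 2
      have "t y = w (V y) y" using 2 by (simp add: t_def)
      moreover have "t x = w (V y) x" by (rule t_near[OF 2(2) yx_L])
      moreover have "dist y x < R" using xy dist_commute[of y x] by simp
      ultimately show ?thesis using l1_dist_cutoff_weight_le[OF \<Xi>[OF V(1)[OF 2(2)]] R \<delta>, of y x]
        by (simp add: w_def l1_dist_commute)
    next
      case 3
      then show ?thesis using R L \<delta> by (simp add: t_def l1_dist_def fsupp_def)
    qed
  qed
  ultimately show ?thesis by blast
qed

lemma normalized_sum_weights:
  fixes t :: "'i \<Rightarrow> 'a::metric_space \<Rightarrow> 'a \<Rightarrow> real"
  assumes I: "finite I" and loc: "\<And>i z. i \<in> I \<Longrightarrow> local_weight M S z (t i z)"
    and mass_ge: "1 \<le> (\<Sum>i\<in>I. mass (t i x))"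
  defines "g \<equiv> \<lambda>z p. (\<Sum>i\<in>I. t i z p) / (\<Sum>i\<in>I. mass (t i z))"
  shows "local_weight (card I * M) S x (g x)" and "mass (g x) = 1"
    and "l1_dist (g x) (g y) \<le> 2 * (\<Sum>i\<in>I. l1_dist (t i x) (t i y))"
proof -
  define h where "h z p = (\<Sum>i\<in>I. t i z p)" for z p
  have fin: "finite (fsupp (t i z))" if "i \<in> I" for i z
    using loc[OF that] by (simp add: local_weight_def)
  have local_h: "local_weight (card I * M) S z (h z)" for z
    unfolding h_def using I loc by (rule local_weight_sum)
  have mass_h: "mass (h z) = (\<Sum>i\<in>I. mass (t i z))" for z
    unfolding h_def using fin by (intro mass_sum[OF I])
  have g: "g z = (\<lambda>p. h z p / mass (h z))" for z by (simp add: g_def h_def mass_h)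
  have mass_pos: "1 \<le> mass (h x)" using mass_ge by (simp add: mass_h)
  show "local_weight (card I * M) S x (g x)"
    unfolding g using local_h[of x] mass_pos
    by (intro local_weight_mono[OF local_h]) (auto simp: fsupp_def local_weight_def)
  show "mass (g x) = 1" unfolding g using mass_pos by (intro mass_normalize) simp
  have "l1_dist (g x) (g y) \<le> 2 * l1_dist (h x) (h y) / mass (h x)"
    unfolding g using local_h[of x] local_h[of y] mass_pos
    by (intro l1_dist_normalize_le) (auto simp: local_weight_def)
  also have "\<dots> \<le> 2 * l1_dist (h x) (h y)"
    using mass_pos l1_dist_nonneg[of "h x" "h y"] by (simp add: divide_le_eq mult_le_cancel_left1)
  also have "\<dots> \<le> 2 * (\<Sum>i\<in>I. l1_dist (t i x) (t i y))"
    unfolding h_def using l1_dist_sum_le[OF I fin fin] by simp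
  finally show "l1_dist (g x) (g y) \<le> 2 * (\<Sum>i\<in>I. l1_dist (t i x) (t i y))" .
qed

lemma weak_hyperbolic_C_weights:
  fixes R :: real and L \<delta> :: "nat \<Rightarrow> real"
  assumes whC: "weak_hyperbolic_C TYPE('a::metric_space)"
    and R: "0 < R" and L: "\<And>i. R \<le> L i" "mono L" and \<delta>: "\<And>n. 0 < \<delta> n"
  obtains n S M and t :: "nat \<Rightarrow> 'a::metric_space \<Rightarrow> 'a \<Rightarrow> real" where "0 < S"
    "\<And>i x. i \<le> n \<Longrightarrow> local_weight M S x (t i x)"
    "\<And>x. \<exists>i\<le>n. mass (t i x) = 1"
    "\<And>i x y. i \<le> n \<Longrightarrow> dist x y < R \<Longrightarrow> l1_dist (t i x) (t i y) \<le> R / L i + \<delta> n"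
proof -
  have L_pos: "0 < L i" for i using R L(1)[of i] by simp
  have "0 < 3 * L i" for i using L_pos[of i] by simp
  from whC[unfolded weak_hyperbolic_C_def, rule_format, of "\<lambda>i. 3 * L i", OF this]
  obtain n and \<U> :: "nat \<Rightarrow> 'a set set" where disj: "\<forall>i\<le>n. R_disjoint (3 * L i) (\<U> i)"
    and cover: "\<Union>(\<Union>i\<le>n. \<U> i) = UNIV" and unif: "weakly_unif_ls_doubling (\<Union>i\<le>n. \<U> i)"
    by blast
  obtain N D where doubling: "\<And>U. U \<in> (\<Union>i\<le>n. \<U> i) \<Longrightarrow> ls_doubling N D U"
    using unif unfolding weakly_unif_ls_doubling_def by blast
  obtain S M where S: "0 < S" and near:
      "\<And>U :: 'a set. ls_doubling N D U \<Longrightarrow> U \<noteq> {} \<Longrightarrow> \<exists>\<xi>. weights_near U M S (L n) R (\<delta> n) \<xi>"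
    using ls_doubling_weights_near[OF L_pos R \<delta>, where N = N and D = D] by blast
  have family: "\<exists>t. (\<forall>x. local_weight M S x (t x) \<and> (x \<in> \<Union>(\<U> i) \<longrightarrow> mass (t x) = 1)) \<and>
      (\<forall>x y. dist x y < R \<longrightarrow> l1_dist (t x) (t y) \<le> R / L i + \<delta> n)" if i: "i \<in> {..n}" for i
  proof (rule R_disjoint_family_weights)
    show "R_disjoint (3 * L i) (\<U> i)" using disj i by simp
    show "0 < R" "R \<le> L i" "0 \<le> \<delta> n" using R L(1) \<delta>[of n] by (simp_all add: less_imp_le)
    fix U assume U: "U \<in> \<U> i"
    have "ls_doubling N D U" using i U by (intro doubling) auto
    moreover have "U \<noteq> {}" using disj i U by (simp add: R_disjoint_def)
    ultimately obtain \<xi> where "weights_near U M S (L n) R (\<delta> n) \<xi>" using near by meson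
    moreover have "L i \<le> L n" using i L(2) by (simp add: monoD)
    ultimately have "weights_near U M S (L i) R (\<delta> n) \<xi>" by (elim weights_near_mono) auto
    then show "\<exists>\<xi>. weights_near U M S (L i) R (\<delta> n) \<xi>" by blast
  qed
  have "\<forall>i\<in>{..n}. \<exists>t. (\<forall>x. local_weight M S x (t x) \<and> (x \<in> \<Union>(\<U> i) \<longrightarrow> mass (t x) = 1)) \<and>
      (\<forall>x y. dist x y < R \<longrightarrow> l1_dist (t x) (t y) \<le> R / L i + \<delta> n)"
    by (intro ballI family)
  from bchoice[OF this] obtain t where t: "\<forall>i\<in>{..n}.
      (\<forall>x. local_weight M S x (t i x) \<and> (x \<in> \<Union>(\<U> i) \<longrightarrow> mass (t i x) = 1)) \<and>
      (\<forall>x y. dist x y < R \<longrightarrow> l1_dist (t i x) (t i y) \<le> R / L i + \<delta> n)" ..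
  have local: "local_weight M S x (t i x)" if "i \<le> n" for i x using bspec[OF t, of i] that by auto
  have covered: "\<exists>i\<le>n. mass (t i x) = 1" for x
  proof -
    have "x \<in> \<Union>(\<Union>i\<le>n. \<U> i)" by (simp only: cover UNIV_I)
    then obtain i where "i \<le> n" "x \<in> \<Union>(\<U> i)" by blast
    then show ?thesis using bspec[OF t, of i] by auto
  qed
  have variation: "l1_dist (t i x) (t i y) \<le> R / L i + \<delta> n" if "i \<le> n" "dist x y < R" for i x y
    using bspec[OF t, of i] that by auto
  show thesis by (rule that[OF S local covered variation])
qed

lemma sum_half_powers_le: "(\<Sum>i\<le>n. (1 / 2) ^ i :: real) \<le> 2"
proof -
  have "(\<Sum>i\<le>n. (1 / 2) ^ i :: real) = 2 - (1 / 2) ^ n"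
    by (induction n) simp_all
  then show ?thesis by simp
qed

lemma property_A_l1_if_weak_hyperbolic_C:
  assumes whC: "weak_hyperbolic_C TYPE('a::metric_space)"
  shows "property_A_l1 TYPE('a)"
  unfolding property_A_l1_def
proof (intro allI impI)
  fix R \<epsilon> :: real assume R: "0 < R" and \<epsilon>: "0 < \<epsilon>"
  \<comment> \<open>chosen so that \<open>\<Sum>i\<le>n. R / L i\<close> and \<open>\<Sum>i\<le>n. \<delta> n\<close> are both at most \<open>\<epsilon> / 4\<close>\<close>
  define L :: "nat \<Rightarrow> real" where "L i = 2 ^ i * (R * (8 + \<epsilon>) / \<epsilon>)" for i
  define \<delta> :: "nat \<Rightarrow> real" where "\<delta> n = \<epsilon> / (4 * (real n + 1))" for n
  have R_le_L: "R \<le> L i" for i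
  proof -
    have "R \<le> R * (8 + \<epsilon>) / \<epsilon>" using R \<epsilon> by (simp add: field_simps)
    also have "\<dots> \<le> L i"
      unfolding L_def using mult_right_mono[of 1 "2 ^ i" "R * (8 + \<epsilon>) / \<epsilon>"] R \<epsilon> by simp
    finally show ?thesis .
  qed
  have mono_L: "mono L"
    unfolding L_def using R \<epsilon> by (intro monoI mult_right_mono power_increasing) auto
  have \<delta>_pos: "0 < \<delta> n" for n using \<epsilon> by (simp add: \<delta>_def)
  obtain n S M and t :: "nat \<Rightarrow> 'a \<Rightarrow> 'a \<Rightarrow> real" where S: "0 < S"
    and local: "\<And>i x. i \<le> n \<Longrightarrow> local_weight M S x (t i x)"
    and covered: "\<And>x. \<exists>i\<le>n. mass (t i x) = 1"
    and variation: "\<And>i x y. i \<le> n \<Longrightarrow> dist x y < R \<Longrightarrow> l1_dist (t i x) (t i y) \<le> R / L i + \<delta> n"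
    by (rule weak_hyperbolic_C_weights[where \<delta> = \<delta>, OF whC R R_le_L mono_L \<delta>_pos]) blast
  have mass_ge: "1 \<le> (\<Sum>i\<le>n. mass (t i x))" for x
  proof -
    obtain j where "j \<le> n" "mass (t j x) = 1" using covered by blast
    moreover have "mass (t j x) \<le> (\<Sum>i\<le>n. mass (t i x))"
      using \<open>j \<le> n\<close> local by (intro member_le_sum) (auto simp: local_weight_def mass_nonneg)
    ultimately show ?thesis by simp
  qed
  define g where "g x p = (\<Sum>i\<le>n. t i x p) / (\<Sum>i\<le>n. mass (t i x))" for x p
  have local': "local_weight M S z (t i z)" if "i \<in> {..n}" for i z using local that by simp
  have g_local: "local_weight (card {..n} * M) S x (g x)" for x
    unfolding g_def by (rule normalized_sum_weights(1)[OF finite_atMost local' mass_ge])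
  have g_mass: "mass (g x) = 1" for x
    unfolding g_def by (rule normalized_sum_weights(2)[OF finite_atMost local' mass_ge])
  have g_l1: "l1_dist (g x) (g y) \<le> 2 * (\<Sum>i\<le>n. l1_dist (t i x) (t i y))" for x y
    unfolding g_def by (rule normalized_sum_weights(3)[OF finite_atMost local' mass_ge])
  have "l1_dist (g x) (g y) \<le> \<epsilon>" if xy: "dist x y < R" for x y
  proof -
    have "(\<Sum>i\<le>n. l1_dist (t i x) (t i y)) \<le> (\<Sum>i\<le>n. \<epsilon> / (8 + \<epsilon>) * (1 / 2) ^ i + \<delta> n)"
    proof (rule sum_mono)
      fix i assume "i \<in> {..n}"
      moreover have "R / L i = \<epsilon> / (8 + \<epsilon>) * (1 / 2) ^ i"
        using R \<epsilon> by (simp add: L_def power_one_over)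
      ultimately show "l1_dist (t i x) (t i y) \<le> \<epsilon> / (8 + \<epsilon>) * (1 / 2) ^ i + \<delta> n"
        using variation[of i x y] xy by simp
    qed
    also have "\<dots> = \<epsilon> / (8 + \<epsilon>) * (\<Sum>i\<le>n. (1 / 2) ^ i) + \<epsilon> / 4"
    proof -
      have "(1 + real n) * \<delta> n = \<epsilon> / 4" unfolding \<delta>_def by (simp add: field_simps add_pos_nonneg)
      then show ?thesis by (simp add: sum.distrib sum_distrib_left)
    qed
    also have "\<dots> \<le> \<epsilon> / 8 * 2 + \<epsilon> / 4"
    proof -
      have "\<epsilon> / (8 + \<epsilon>) \<le> \<epsilon> / 8" using \<epsilon> by (intro divide_left_mono) auto
      then show ?thesis
        using sum_half_powers_le[of n] \<epsilon>
        by (intro add_right_mono mult_mono) (auto intro: sum_nonneg)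
    qed
    finally show ?thesis using g_l1[of x y] by simp
  qed
  then show "\<exists>S>0. \<exists>M. \<exists>\<xi> :: 'a \<Rightarrow> 'a \<Rightarrow> real. (\<forall>x. local_weight M S x (\<xi> x) \<and> mass (\<xi> x) = 1) \<and>
      (\<forall>x y. dist x y < R \<longrightarrow> l1_dist (\<xi> x) (\<xi> y) \<le> \<epsilon>)"
    using S g_local g_mass by blast
qed

theorem corollary4p6:
  assumes "weak_hyperbolic_C TYPE('a::metric_space)"
  shows "property_A TYPE('a)"
  using property_A_if_property_A_l1 property_A_l1_if_weak_hyperbolic_C assms by blast

end
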